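(* Let $c\ge0$ be a budget. Let $w^*$ (together with $\lambda_2^*,\mu^*$) be an optimal solution of $$\max_{w,\lambda_2,\mu}\ \lambda_2\quad\text{s.t.}\quad \sum_{\{i,j\}\in E_3}w_{ij}L_{ij}+L_0+\mu\boldsymbol e\boldsymbol e^T-\lambda_2 I\succeq 0,\ \ \sum_{\{i,j\}\in E_3}w_{ij}=c,\ \ w_{ij}\ge 0,$$ and let $(\xi,u_1,\dots,u_n)$ be an optimal solution of the embedding problem $$\max_{\xi\in\mathbb{R},\,u_i\in\mathbb{R}^n}\ c\xi-\sum_{\{i,j\}\in E_1\cup E_2}\|u_i-u_j\|^2\quad\text{s.t.}\quad \sum_{i\in V}\|u_i\|^2=1,\ \ \sum_{i\in V}u_i=0,\ \ \|u_i-u_j\|^2\le-\xi\ \ \forall\{i,j\}\in E_3.$$ Then for every $p\in\mathbb{R}^n$, the vector $y=(p^Tu_1,\dots,p^Tu_n)^T$ (the projection of the embedding onto the direction $p$) lies in the eigenspace of $L(w^* )=\sum_{\{i,j\}\in E_3}w^*_{ij}L_{ij}+L_0$ for the eigenvalue $\lambda_2^*$ (its algebraic connectivity), i.e. $L(w^* )y=\lambda_2^*y$.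
   Context: A multiplex network consists of two layers $G_1=(V_1,E_1)$ and $G_2=(V_2,E_2)$, simple undirected graphs with $|V_1|=|V_2|=N$; the vertices of $G_1$ are numbered $1,\dots,N$ and those of $G_2$ are numbered $N+1,\dots,2N$, $n=2N$, $V=V_1\cup V_2$. The interlayer edges form the perfect matching $E_3=\{\{i,N+i\}:i=1,\dots,N\}$ with nonnegative weights $w_{ij}$. $L_{ij}=(\delta_i-\delta_j)(\delta_i-\delta_j)^T$, $\delta_i$ the $i$-th standard basis vector of $\mathbb{R}^n$; $L_0=\sum_{\{i,j\}\in E_1\cup E_2}L_{ij}$; $\boldsymbol e$ is the all-ones vector. The multiplex network is assumed connected; the algebraic connectivity is the second smallest eigenvalue of the Laplacian. *)

theory Defs
  imports Complex_Main
begin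

text \<open>Vertices are the natural numbers 1..n with n = 2N.  Vectors in R^n are functions
  nat => real (only components 1..n matter); n x n matrices are functions nat => nat => real.
  An undirected edge {i,j} is stored as the pair (i,j) with i < j.\<close>

definition delta :: "nat \<Rightarrow> nat \<Rightarrow> real" where
  "delta i a = (if a = i then 1 else 0)"

definition Lij :: "nat \<Rightarrow> nat \<Rightarrow> nat \<Rightarrow> nat \<Rightarrow> real" where
  "Lij i j a b = (delta i a - delta j a) * (delta i b - delta j b)"

definition L0 :: "(nat \<times> nat) set \<Rightarrow> (nat \<times> nat) set \<Rightarrow> nat \<Rightarrow> nat \<Rightarrow> real" where
  "L0 E1 E2 a b = (\<Sum>(i,j)\<in>E1 \<union> E2. Lij i j a b)"

definition Lw :: "nat \<Rightarrow> (nat \<times> nat) set \<Rightarrow> (nat \<times> nat) set \<Rightarrow> (nat \<Rightarrow> real)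
                   \<Rightarrow> nat \<Rightarrow> nat \<Rightarrow> real" where
  "Lw N E1 E2 w a b = (\<Sum>i=1..N. w i * Lij i (N+i) a b) + L0 E1 E2 a b"

definition mat_vec :: "nat \<Rightarrow> (nat \<Rightarrow> nat \<Rightarrow> real) \<Rightarrow> (nat \<Rightarrow> real) \<Rightarrow> nat \<Rightarrow> real" where
  "mat_vec n M x a = (\<Sum>b=1..n. M a b * x b)"

text \<open>Positive semidefinite n x n matrix (symmetric in our uses).\<close>
definition psd :: "nat \<Rightarrow> (nat \<Rightarrow> nat \<Rightarrow> real) \<Rightarrow> bool" where
  "psd n M \<longleftrightarrow> (\<forall>x::nat \<Rightarrow> real. (\<Sum>a=1..n. \<Sum>b=1..n. x a * M a b * x b) \<ge> 0)"

definition simple_graph_on :: "nat set \<Rightarrow> (nat \<times> nat) set \<Rightarrow> bool" where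
  "simple_graph_on V E \<longleftrightarrow> finite E \<and> (\<forall>(i,j)\<in>E. i < j \<and> i \<in> V \<and> j \<in> V)"

text \<open>Adjacency in the multiplex network (E1, E2 and the interlayer matching E3).\<close>
definition multiplex_adj :: "nat \<Rightarrow> (nat \<times> nat) set \<Rightarrow> (nat \<times> nat) set \<Rightarrow> nat \<Rightarrow> nat \<Rightarrow> bool" where
  "multiplex_adj N E1 E2 a b \<longleftrightarrow>
     (a,b) \<in> E1 \<union> E2 \<or> (b,a) \<in> E1 \<union> E2 \<or>
     (a \<in> {1..N} \<and> b = N + a) \<or> (b \<in> {1..N} \<and> a = N + b)"

definition multiplex_connected :: "nat \<Rightarrow> (nat \<times> nat) set \<Rightarrow> (nat \<times> nat) set \<Rightarrow> bool" where
  "multiplex_connected N E1 E2 \<longleftrightarrow>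
     (\<forall>a\<in>{1..2*N}. \<forall>b\<in>{1..2*N}. (multiplex_adj N E1 E2)\<^sup>*\<^sup>* a b)"

definition sdp_feasible :: "nat \<Rightarrow> (nat \<times> nat) set \<Rightarrow> (nat \<times> nat) set \<Rightarrow> real
                            \<Rightarrow> (nat \<Rightarrow> real) \<Rightarrow> real \<Rightarrow> real \<Rightarrow> bool" where
  "sdp_feasible N E1 E2 c w lam mu \<longleftrightarrow>
     psd (2*N) (\<lambda>a b. Lw N E1 E2 w a b + mu - lam * (if a = b then 1 else 0)) \<and>
     (\<Sum>i=1..N. w i) = c \<and> (\<forall>i\<in>{1..N}. w i \<ge> 0)"

definition sdp_optimal :: "nat \<Rightarrow> (nat \<times> nat) set \<Rightarrow> (nat \<times> nat) set \<Rightarrow> real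
                            \<Rightarrow> (nat \<Rightarrow> real) \<Rightarrow> real \<Rightarrow> real \<Rightarrow> bool" where
  "sdp_optimal N E1 E2 c w lam mu \<longleftrightarrow>
     sdp_feasible N E1 E2 c w lam mu \<and>
     (\<forall>w' lam' mu'. sdp_feasible N E1 E2 c w' lam' mu' \<longrightarrow> lam' \<le> lam)"

text \<open>Squared Euclidean distance of u_i, u_j in R^n (u i k = k-th component of u_i).\<close>
definition sqdist :: "nat \<Rightarrow> (nat \<Rightarrow> nat \<Rightarrow> real) \<Rightarrow> nat \<Rightarrow> nat \<Rightarrow> real" where
  "sqdist n u i j = (\<Sum>k=1..n. (u i k - u j k)\<^sup>2)"

definition emb_feasible :: "nat \<Rightarrow> real \<Rightarrow> (nat \<Rightarrow> nat \<Rightarrow> real) \<Rightarrow> bool" where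
  "emb_feasible N xi u \<longleftrightarrow>
     (\<Sum>i=1..2*N. \<Sum>k=1..2*N. (u i k)\<^sup>2) = 1 \<and>
     (\<forall>k\<in>{1..2*N}. (\<Sum>i=1..2*N. u i k) = 0) \<and>
     (\<forall>i\<in>{1..N}. sqdist (2*N) u i (N+i) \<le> - xi)"

definition emb_objective :: "nat \<Rightarrow> (nat \<times> nat) set \<Rightarrow> (nat \<times> nat) set \<Rightarrow> real
                              \<Rightarrow> real \<Rightarrow> (nat \<Rightarrow> nat \<Rightarrow> real) \<Rightarrow> real" where
  "emb_objective N E1 E2 c xi u = c * xi - (\<Sum>(i,j)\<in>E1 \<union> E2. sqdist (2*N) u i j)"

definition emb_optimal :: "nat \<Rightarrow> (nat \<times> nat) set \<Rightarrow> (nat \<times> nat) set \<Rightarrow> real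
                            \<Rightarrow> real \<Rightarrow> (nat \<Rightarrow> nat \<Rightarrow> real) \<Rightarrow> bool" where
  "emb_optimal N E1 E2 c xi u \<longleftrightarrow>
     emb_feasible N xi u \<and>
     (\<forall>xi' u'. emb_feasible N xi' u' \<longrightarrow>
        emb_objective N E1 E2 c xi' u' \<le> emb_objective N E1 E2 c xi u)"

end

theory Submission
  imports Defs
begin

(*
  The embedding problem is dual to the SDP, and one direction of weak duality suffices.  A
  trace-one positive semidefinite X with e^T X e = 0 is the Gram matrix of a feasible embedding,
  so the optimality of u gives max_i <L_0 + c L_{i,N+i}, X> >= D, where D is minus the optimal
  embedding value.  A minimax lemma for finitely many affine functions on a convex set then
  produces weights w' with sum c and <L(w'), X> >= D for all such X, which makes (w', D, |D|)
  feasible for the SDP; hence D <= lambda_2.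

  Complementary slackness follows.  With M = L(w) + mu e e^T - lambda_2 I, positive semidefinite
  by feasibility, the columns u_k of the embedding satisfy
  sum_k u_k^T M u_k = sum_i w_i |u_i - u_{N+i}|^2 + sum_{E_1 u E_2} |u_i - u_j|^2 - lambda_2
  <= D - lambda_2 <= 0, so every u_k^T M u_k vanishes, hence M u_k = 0, and e^T u_k = 0 turns this
  into L(w) u_k = lambda_2 u_k.  The projection onto p is the combination sum_k p_k u_k.
*)

section \<open>Nonnegative combinations of affine functions\<close>

(* cmb s x y stands for the convex combination (1 - s) x + s y; no linear structure on the
   carrier is needed. *)

definition convex_under :: "'x set \<Rightarrow> (real \<Rightarrow> 'x \<Rightarrow> 'x \<Rightarrow> 'x) \<Rightarrow> bool" where
  "convex_under S cmb \<longleftrightarrow>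
     (\<forall>s x y. x \<in> S \<longrightarrow> y \<in> S \<longrightarrow> 0 \<le> s \<longrightarrow> s \<le> 1 \<longrightarrow> cmb s x y \<in> S)"

definition affine_under :: "'x set \<Rightarrow> (real \<Rightarrow> 'x \<Rightarrow> 'x \<Rightarrow> 'x) \<Rightarrow> ('x \<Rightarrow> real) \<Rightarrow> bool" where
  "affine_under S cmb f \<longleftrightarrow>
     (\<forall>s x y. x \<in> S \<longrightarrow> y \<in> S \<longrightarrow> 0 \<le> s \<longrightarrow> s \<le> 1 \<longrightarrow>
        f (cmb s x y) = (1 - s) * f x + s * f y)"

lemma affine_under_ratio_le:
  assumes S: "convex_under S cmb" and f: "affine_under S cmb f" and g: "affine_under S cmb g"
    and nonneg: "\<And>z. z \<in> S \<Longrightarrow> 0 \<le> f z \<or> 0 \<le> g z"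
    and x: "x \<in> S" "f x < 0" and y: "y \<in> S" "g y < 0"
  shows "g y / (g y - f y) \<le> g x / (g x - f x)"
proof -
  (* The point z of the segment from x to y where f and g agree lies in S, so f z \<ge> 0. *)
  have gx: "0 \<le> g x" and fy: "0 \<le> f y" using nonneg x y by force+
  define A B where "A = g x - f x" and "B = f y - g y"
  have A: "0 < A" and B: "0 < B" using gx fy x y unfolding A_def B_def by auto
  define z where "z = cmb (A / (A + B)) x y"
  have s: "0 \<le> A / (A + B)" "A / (A + B) \<le> 1" using A B by auto
  have "z \<in> S" using S x y s unfolding z_def convex_under_def by blast
  have comb: "(A + B) * ((1 - A / (A + B)) * a + A / (A + B) * b) = B * a + A * b" for a b
    using A B by (simp add: divide_simps)
  have fz: "(A + B) * f z = B * f x + A * f y" and gz: "(A + B) * g z = B * g x + A * g y"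
    using f g x y s comb unfolding z_def affine_under_def by metis+
  have "(A + B) * (f z - g z) = B * (f x - g x) + A * (f y - g y)"
    using fz gz by (simp add: algebra_simps)
  also have "\<dots> = 0" unfolding A_def B_def by (simp add: algebra_simps)
  finally have "f z = g z" using A B by simp
  then have "0 \<le> f z" using nonneg[OF \<open>z \<in> S\<close>] by auto
  then have "0 \<le> B * f x + A * f y" using fz A B by (metis add_pos_pos less_imp_le mult_nonneg_nonneg)
  then have "g y * f x \<le> g x * f y" unfolding A_def B_def by (simp add: algebra_simps)
  then show ?thesis using A B unfolding A_def B_def by (simp add: divide_simps algebra_simps)
qed

lemma affine_under_pair_nonneg_combination:
  assumes S: "convex_under S cmb" and f: "affine_under S cmb f" and g: "affine_under S cmb g"
    and nonneg: "\<And>x. x \<in> S \<Longrightarrow> 0 \<le> f x \<or> 0 \<le> g x"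
  shows "\<exists>t. 0 \<le> t \<and> t \<le> 1 \<and> (\<forall>x\<in>S. 0 \<le> t * f x + (1 - t) * g x)"
proof -
  define r where "r x = g x / (g x - f x)" for x
  define t where "t = Sup (insert 0 (r ` {y \<in> S. g y < 0}))"
  have r_unit: "0 \<le> r y \<and> r y \<le> 1" if "y \<in> S" "g y < 0" for y
    using nonneg[of y] that unfolding r_def by (auto simp: divide_simps)
  have bdd: "bdd_above (insert 0 (r ` {y \<in> S. g y < 0}))"
    using r_unit by (auto intro!: bdd_aboveI[of _ 1])
  have t_ge: "r y \<le> t" if "y \<in> S" "g y < 0" for y
    unfolding t_def using bdd that by (auto intro: cSup_upper)
  have t0: "0 \<le> t" unfolding t_def using bdd by (auto intro: cSup_upper)
  have t1: "t \<le> 1" unfolding t_def using r_unit by (auto intro!: cSup_least)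
  have t_le: "t \<le> r x" if "x \<in> S" "f x < 0" for x
  proof -
    have "0 \<le> r x" using nonneg[of x] that unfolding r_def by (auto simp: divide_simps)
    then show ?thesis unfolding t_def r_def
      using affine_under_ratio_le[OF S f g nonneg] that by (auto intro!: cSup_least)
  qed
  have "0 \<le> t * f x + (1 - t) * g x" if x: "x \<in> S" for x
  proof -
    have r: "r x * (f x - g x) = - g x" if "f x \<noteq> g x"
      using that unfolding r_def by (simp add: field_simps)
    consider "g x < 0" | "f x < 0" | "0 \<le> f x" "0 \<le> g x" by linarith
    then show ?thesis
    proof cases
      case 1
      then have "r x * (f x - g x) \<le> t * (f x - g x)"
        using t_ge[OF x] nonneg[OF x] by (intro mult_right_mono) auto
      then show ?thesis using r 1 nonneg[OF x] by (simp add: algebra_simps)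
    next
      case 2
      then have "r x * (f x - g x) \<le> t * (f x - g x)"
        using t_le[OF x] nonneg[OF x] by (intro mult_right_mono_neg) auto
      then show ?thesis using r 2 nonneg[OF x] by (simp add: algebra_simps)
    qed (use t0 t1 in simp)
  qed
  then show ?thesis using t0 t1 by blast
qed

lemma convex_under_negative_part:
  assumes "convex_under S cmb" "affine_under S cmb f"
  shows "convex_under {x \<in> S. f x < 0} cmb"
  using assms unfolding convex_under_def affine_under_def by (simp add: convex_bound_lt)

lemma affine_under_subset: "T \<subseteq> S \<Longrightarrow> affine_under S cmb f \<Longrightarrow> affine_under T cmb f"
  unfolding affine_under_def by blast

lemma affine_under_sum:
  assumes "\<And>i. i \<in> I \<Longrightarrow> affine_under S cmb (g i)"
  shows "affine_under S cmb (\<lambda>x. \<Sum>i\<in>I. m i * g i x)"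
  unfolding affine_under_def
proof (intro allI impI)
  fix s :: real and x y assume "x \<in> S" "y \<in> S" "0 \<le> s" "s \<le> 1"
  then have gc: "g i (cmb s x y) = (1 - s) * g i x + s * g i y" if "i \<in> I" for i
    using assms[OF that] unfolding affine_under_def by blast
  have "(\<Sum>i\<in>I. m i * g i (cmb s x y)) = (\<Sum>i\<in>I. (1 - s) * (m i * g i x) + s * (m i * g i y))"
    by (intro sum.cong refl) (simp add: gc algebra_simps)
  then show "(\<Sum>i\<in>I. m i * g i (cmb s x y)) =
      (1 - s) * (\<Sum>i\<in>I. m i * g i x) + s * (\<Sum>i\<in>I. m i * g i y)"
    by (simp add: sum.distrib sum_distrib_left)
qed

lemma affine_under_finite_nonneg_combination:
  assumes "finite I" "I \<noteq> {}" and "convex_under S cmb" and "\<forall>i\<in>I. affine_under S cmb (g i)"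
    and "\<forall>x\<in>S. \<exists>i\<in>I. 0 \<le> g i x"
  shows "\<exists>l. (\<forall>i\<in>I. 0 \<le> l i) \<and> sum l I = 1 \<and> (\<forall>x\<in>S. 0 \<le> (\<Sum>i\<in>I. l i * g i x))"
  using assms
proof (induction I arbitrary: S rule: finite_ne_induct)
  case (singleton i)
  then show ?case by (intro exI[of _ "\<lambda>_. 1"]) auto
next
  case (insert j I)
  (* Where g j is negative the other functions suffice by induction; the resulting combination
     is then mixed with g j by the two-function case. *)
  let ?S' = "{x \<in> S. g j x < 0}"
  obtain m where m: "\<forall>i\<in>I. 0 \<le> m i" "sum m I = 1" "\<forall>x\<in>?S'. 0 \<le> (\<Sum>i\<in>I. m i * g i x)"
    using insert.IH[of ?S'] insert.prems convex_under_negative_part[of S cmb "g j"]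
      affine_under_subset[of ?S' S cmb] by force
  define h where "h x = (\<Sum>i\<in>I. m i * g i x)" for x
  obtain t where t: "0 \<le> t" "t \<le> 1" "\<forall>x\<in>S. 0 \<le> t * h x + (1 - t) * g j x"
    using affine_under_pair_nonneg_combination[of S cmb h "g j"] insert.prems m(3)
      affine_under_sum[of I S cmb g m] unfolding h_def by force
  define l where "l i = (if i = j then 1 - t else t * m i)" for i
  have l_on_I: "(\<Sum>i\<in>I. l i * a i) = t * (\<Sum>i\<in>I. m i * a i)" for a :: "'a \<Rightarrow> real"
    using insert.hyps unfolding l_def sum_distrib_left by (intro sum.cong) auto
  have "(\<Sum>i\<in>insert j I. l i * g i x) = t * h x + (1 - t) * g j x" for x
    using insert.hyps l_on_I[of "\<lambda>i. g i x"] unfolding h_def by (simp add: l_def)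
  moreover have "sum l (insert j I) = 1"
    using insert.hyps l_on_I[of "\<lambda>_. 1"] m(2) by (simp add: l_def)
  moreover have "\<forall>i\<in>insert j I. 0 \<le> l i" using t m(1) by (simp add: l_def)
  ultimately show ?case using t(3) by metis
qed

section \<open>Quadratic forms and Gram factorization\<close>

definition qform :: "'a set \<Rightarrow> ('a \<Rightarrow> 'a \<Rightarrow> real) \<Rightarrow> ('a \<Rightarrow> real) \<Rightarrow> real" where
  "qform I X x = (\<Sum>a\<in>I. \<Sum>b\<in>I. x a * X a b * x b)"

definition mat_inner :: "'a set \<Rightarrow> ('a \<Rightarrow> 'a \<Rightarrow> real) \<Rightarrow> ('a \<Rightarrow> 'a \<Rightarrow> real) \<Rightarrow> real" where
  "mat_inner I A X = (\<Sum>a\<in>I. \<Sum>b\<in>I. A a b * X a b)"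

definition gram :: "'k set \<Rightarrow> ('a \<Rightarrow> 'k \<Rightarrow> real) \<Rightarrow> 'a \<Rightarrow> 'a \<Rightarrow> real" where
  "gram K U a b = (\<Sum>k\<in>K. U a k * U b k)"

lemma qform_cong:
  "(\<And>a. a \<in> I \<Longrightarrow> x a = y a) \<Longrightarrow> qform I X x = qform I X y"
  unfolding qform_def by (intro sum.cong refl) auto

lemma mat_inner_cong:
  "(\<And>a b. a \<in> I \<Longrightarrow> b \<in> I \<Longrightarrow> X a b = Y a b) \<Longrightarrow> mat_inner I A X = mat_inner I A Y"
  unfolding mat_inner_def by (intro sum.cong refl) auto

lemma qform_eq_mat_inner: "qform I A x = mat_inner I A (\<lambda>a b. x a * x b)"
  unfolding qform_def mat_inner_def by (intro sum.cong refl) (simp add: algebra_simps)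

lemma qform_ones: "qform I (\<lambda>_ _. 1) x = (\<Sum>a\<in>I. x a)\<^sup>2"
  unfolding qform_def by (simp add: power2_eq_square sum_product)

lemma qform_outer: "qform I (\<lambda>a b. v a * v b) x = (\<Sum>a\<in>I. x a * v a)\<^sup>2"
  unfolding qform_def power2_eq_square sum_product by (intro sum.cong refl) (simp add: algebra_simps)

lemma mat_inner_add:
  "mat_inner I (\<lambda>a b. A a b + B a b) X = mat_inner I A X + mat_inner I B X"
  unfolding mat_inner_def by (simp add: distrib_right sum.distrib)

lemma mat_inner_sum:
  "mat_inner I (\<lambda>a b. \<Sum>p\<in>P. f p a b) X = (\<Sum>p\<in>P. mat_inner I (f p) X)"
proof -
  have "mat_inner I (\<lambda>a b. \<Sum>p\<in>P. f p a b) X = (\<Sum>a\<in>I. \<Sum>p\<in>P. \<Sum>b\<in>I. f p a b * X a b)"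
    unfolding mat_inner_def sum_distrib_right by (intro sum.cong refl sum.swap)
  also have "\<dots> = (\<Sum>p\<in>P. mat_inner I (f p) X)"
    unfolding mat_inner_def by (rule sum.swap)
  finally show ?thesis .
qed

lemma mat_inner_scale: "mat_inner I (\<lambda>a b. c * A a b) X = c * mat_inner I A X"
  unfolding mat_inner_def by (simp add: sum_distrib_left mult.assoc)

lemma qform_insert:
  assumes "finite I" "j \<notin> I" "\<And>a. a \<in> I \<Longrightarrow> X j a = X a j"
  shows "qform (insert j I) X x = qform I X x + 2 * x j * (\<Sum>a\<in>I. x a * X a j) + (x j)\<^sup>2 * X j j"
proof -
  have "(\<Sum>b\<in>I. x j * X j b * x b) = x j * (\<Sum>a\<in>I. x a * X a j)"
    and "(\<Sum>a\<in>I. x a * X a j * x j) = x j * (\<Sum>a\<in>I. x a * X a j)"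
    using assms(3) unfolding sum_distrib_left by (auto intro!: sum.cong)
  then show ?thesis
    using assms(1,2) unfolding qform_def by (simp add: sum.distrib power2_eq_square algebra_simps)
qed

lemma qform_gram: "qform I (gram K V) y = (\<Sum>k\<in>K. (\<Sum>a\<in>I. y a * V a k)\<^sup>2)"
proof -
  have "qform I (gram K V) y = (\<Sum>a\<in>I. \<Sum>b\<in>I. \<Sum>k\<in>K. (y a * V a k) * (y b * V b k))"
    unfolding qform_def gram_def sum_distrib_left sum_distrib_right
    by (intro sum.cong refl) (simp add: algebra_simps)
  also have "\<dots> = (\<Sum>a\<in>I. \<Sum>k\<in>K. \<Sum>b\<in>I. (y a * V a k) * (y b * V b k))"
    by (intro sum.cong refl sum.swap)
  also have "\<dots> = (\<Sum>k\<in>K. \<Sum>a\<in>I. \<Sum>b\<in>I. (y a * V a k) * (y b * V b k))"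
    by (rule sum.swap)
  finally show ?thesis by (simp add: power2_eq_square sum_product)
qed

lemma mat_inner_gram: "mat_inner I A (gram K U) = (\<Sum>k\<in>K. qform I A (\<lambda>a. U a k))"
proof -
  have "mat_inner I A (gram K U) = (\<Sum>a\<in>I. \<Sum>b\<in>I. \<Sum>k\<in>K. U a k * A a b * U b k)"
    unfolding mat_inner_def gram_def sum_distrib_left by (intro sum.cong refl) (simp add: algebra_simps)
  also have "\<dots> = (\<Sum>a\<in>I. \<Sum>k\<in>K. \<Sum>b\<in>I. U a k * A a b * U b k)"
    by (intro sum.cong refl sum.swap)
  also have "\<dots> = (\<Sum>k\<in>K. qform I A (\<lambda>a. U a k))"
    unfolding qform_def by (rule sum.swap)
  finally show ?thesis .
qed

lemma sum_delta_mult: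
  "finite I \<Longrightarrow> a \<in> I \<Longrightarrow> (\<Sum>b\<in>I. (if a = b then 1 else 0) * f b) = (f a :: real)"
  by (simp add: if_distrib[of "\<lambda>c. c * _"] sum.delta' cong: if_cong)

lemma qform_indicator:
  "finite I \<Longrightarrow> a \<in> I \<Longrightarrow> qform I X (\<lambda>b. if a = b then 1 else 0) = X a a"
  unfolding qform_def
  by (simp add: if_distrib[of "\<lambda>c. c * _"] if_distrib[of "\<lambda>c. _ * c"] sum.delta' cong: if_cong)

lemma psd_iff_qform: "psd n M \<longleftrightarrow> (\<forall>x. 0 \<le> qform {1..n} M x)"
  unfolding psd_def qform_def ..

lemma psd_diag_nonneg:
  "finite I \<Longrightarrow> a \<in> I \<Longrightarrow> (\<And>x. 0 \<le> qform I X x) \<Longrightarrow> 0 \<le> X a a"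
  by (metis qform_indicator)

lemma psd_zero_diag_imp_zero_column:
  assumes I: "finite I" "j \<notin> I" "a \<in> I" and sym: "\<And>b. b \<in> I \<Longrightarrow> X j b = X b j"
    and psd: "\<And>x. 0 \<le> qform (insert j I) X x" and zero: "X j j = 0"
  shows "X a j = 0"
proof (rule ccontr)
  assume ne: "X a j \<noteq> 0"
  define t where "t = - (X a a + 1) / (2 * X a j)"
  define x where "x b = (if a = b then 1 else if b = j then t else 0)" for b
  have x_on_I: "x b = (if a = b then 1 else 0)" if "b \<in> I" for b
    using I that unfolding x_def by auto
  have "qform I X x = X a a"
    using qform_cong[of I x, OF x_on_I] qform_indicator[OF I(1,3)] by simp
  moreover have "(\<Sum>b\<in>I. x b * X b j) = X a j"
    using sum_delta_mult[OF I(1,3), of "\<lambda>b. X b j"] x_on_I by (simp cong: sum.cong)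
  moreover have "x j = t" using I unfolding x_def by auto
  ultimately have "qform (insert j I) X x = X a a + 2 * t * X a j"
    using qform_insert[of I j X, OF I(1,2) sym] zero by simp
  also have "\<dots> = -1" unfolding t_def using ne by (simp add: field_simps)
  finally show False using psd[of x] by simp
qed

lemma schur_complement_psd:
  assumes I: "finite I" "j \<notin> I" and sym: "\<And>b. b \<in> I \<Longrightarrow> X j b = X b j"
    and psd: "\<And>x. 0 \<le> qform (insert j I) X x"
  shows "0 \<le> qform I (\<lambda>a b. X a b - X a j * X b j / X j j) x"
proof -
  (* x' minimises the form in the j-th coordinate; if X j j = 0 then, as s / 0 = 0, it merely
     sets that coordinate to 0. *)
  define s where "s = (\<Sum>a\<in>I. x a * X a j)"
  define x' where "x' = x(j := - s / X j j)"
  have "qform I (\<lambda>a b. X a b - X a j * X b j / X j j) x = qform I X x - s\<^sup>2 / X j j"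
    unfolding qform_def s_def power2_eq_square sum_product sum_divide_distrib
    by (simp add: sum_subtractf[symmetric] algebra_simps)
  also have "qform I X x = qform I X x'"
    using I unfolding x'_def by (intro qform_cong) auto
  also have "\<dots> - s\<^sup>2 / X j j = qform (insert j I) X x'"
  proof -
    have "(\<Sum>a\<in>I. x' a * X a j) = s"
      using I unfolding x'_def s_def by (intro sum.cong) auto
    then have "qform (insert j I) X x' = qform I X x' + 2 * x' j * s + (x' j)\<^sup>2 * X j j"
      using qform_insert[of I j X, OF I sym, of x'] by simp
    moreover have "2 * x' j * s + (x' j)\<^sup>2 * X j j = - s\<^sup>2 / X j j"
      by (cases "X j j = 0") (simp_all add: x'_def power2_eq_square field_simps)
    ultimately show ?thesis by linarith
  qed
  finally show ?thesis using psd[of x'] by simp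
qed

lemma psd_pivot_row_rank_one:
  assumes I: "finite I" "j \<notin> I" and sym: "\<And>b. b \<in> I \<Longrightarrow> X j b = X b j"
    and psd: "\<And>x. 0 \<le> qform (insert j I) X x"
    and ab: "a \<in> insert j I" "b \<in> insert j I" "a = j \<or> b = j"
  shows "X a b = X a j * X b j / X j j"
proof (cases "X j j = 0")
  case True
  have "X c j = 0" if "c \<in> insert j I" for c
    using psd_zero_diag_imp_zero_column[OF I _ sym psd True] True that by blast
  moreover have "X j c = 0" if "c \<in> I" for c using calculation sym that by simp
  ultimately have "X a b = 0" using ab by auto
  then show ?thesis using True by simp
next
  case False
  show ?thesis
  proof (cases "a = j")
    case True
    then show ?thesis using ab sym False by (cases "b = j") auto
  next
    case False
    then show ?thesis using ab \<open>X j j \<noteq> 0\<close> by auto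
  qed
qed

lemma psd_gram_factorization:
  assumes "finite I" and "\<forall>a\<in>I. \<forall>b\<in>I. X a b = X b a" and "\<forall>x. 0 \<le> qform I X x"
  shows "\<exists>U. \<forall>a\<in>I. \<forall>b\<in>I. X a b = gram I U a b"
  using assms
proof (induction I arbitrary: X rule: finite_induct)
  case empty
  then show ?case by simp
next
  case (insert j I)
  have sym: "\<And>b. b \<in> I \<Longrightarrow> X j b = X b j" using insert.prems(1) by blast
  have psd: "\<And>x. 0 \<le> qform (insert j I) X x" using insert.prems(2) by blast
  define v where "v a = X a j / sqrt (X j j)" for a
  have "0 \<le> X j j" using psd_diag_nonneg[of "insert j I" j X] insert.hyps psd by simp
  then have vv: "v a * v b = X a j * X b j / X j j" for a b
    unfolding v_def by (simp add: real_sqrt_mult[symmetric])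
  have v_edge: "X a b = v a * v b" if "a \<in> insert j I" "b \<in> insert j I" "a = j \<or> b = j" for a b
    unfolding vv by (rule psd_pivot_row_rank_one[OF insert.hyps(1,2) sym psd that])
  have "\<exists>U'. \<forall>a\<in>I. \<forall>b\<in>I. X a b - v a * v b = gram I U' a b"
  proof (rule insert.IH; intro ballI allI)
    show "X a b - v a * v b = X b a - v b * v a" if "a \<in> I" "b \<in> I" for a b
      using insert.prems(1) that by simp
    show "0 \<le> qform I (\<lambda>a b. X a b - v a * v b) x" for x
      unfolding vv by (rule schur_complement_psd[OF insert.hyps(1,2) sym psd])
  qed
  then obtain U' where U': "\<forall>a\<in>I. \<forall>b\<in>I. X a b - v a * v b = gram I U' a b" ..
  define U where "U a k = (if k = j then v a else if a = j then 0 else U' a k)" for a k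
  have "X a b = gram (insert j I) U a b" if ab: "a \<in> insert j I" "b \<in> insert j I" for a b
  proof -
    have "(\<Sum>k\<in>I. U a k * U b k) = (if a = j \<or> b = j then 0 else gram I U' a b)"
      using insert.hyps unfolding gram_def U_def by (auto intro!: sum.cong sum.neutral)
    then have "gram (insert j I) U a b = v a * v b + (if a = j \<or> b = j then 0 else gram I U' a b)"
      using insert.hyps unfolding gram_def U_def by simp
    moreover have "X a b = v a * v b + (if a = j \<or> b = j then 0 else gram I U' a b)"
      using v_edge[OF ab] U' ab by (cases "a = j \<or> b = j") (auto simp: diff_eq_eq)
    ultimately show ?thesis by simp
  qed
  then show ?case by blast
qed

lemma psd_qform_zero_imp_mat_vec_zero:
  assumes sym: "\<forall>a\<in>{1..n}. \<forall>b\<in>{1..n}. M a b = M b a" and "psd n M"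
    and zero: "qform {1..n} M y = 0" and a: "a \<in> {1..n}"
  shows "mat_vec n M y a = 0"
proof -
  obtain V where V: "\<forall>a\<in>{1..n}. \<forall>b\<in>{1..n}. M a b = gram {1..n} V a b"
    using psd_gram_factorization[of "{1..n}" M] sym \<open>psd n M\<close> unfolding psd_iff_qform by auto
  have "qform {1..n} M y = qform {1..n} (gram {1..n} V) y"
    unfolding qform_def using V by (intro sum.cong refl) (auto simp: sum_distrib_left)
  then have col: "(\<Sum>b=1..n. y b * V b k) = 0" if "k \<in> {1..n}" for k
    using that zero unfolding qform_gram by (simp add: sum_nonneg_eq_0_iff)
  have "mat_vec n M y a = (\<Sum>b=1..n. \<Sum>k=1..n. V a k * (y b * V b k))"
    unfolding mat_vec_def using V a
    by (intro sum.cong refl) (simp add: gram_def sum_distrib_left sum_distrib_right algebra_simps)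
  also have "\<dots> = (\<Sum>k=1..n. V a k * (\<Sum>b=1..n. y b * V b k))"
    by (subst sum.swap) (simp add: sum_distrib_left)
  finally show ?thesis using col by simp
qed

lemma mat_vec_linear_combination:
  "mat_vec n A (\<lambda>i. \<Sum>k=1..n. p k * u i k) a = (\<Sum>k=1..n. p k * mat_vec n A (\<lambda>i. u i k) a)"
proof -
  have "mat_vec n A (\<lambda>i. \<Sum>k=1..n. p k * u i k) a = (\<Sum>b=1..n. \<Sum>k=1..n. p k * (A a b * u b k))"
    unfolding mat_vec_def sum_distrib_left by (intro sum.cong refl) (simp add: algebra_simps)
  also have "\<dots> = (\<Sum>k=1..n. \<Sum>b=1..n. p k * (A a b * u b k))" by (rule sum.swap)
  finally show ?thesis unfolding mat_vec_def sum_distrib_left .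
qed

section \<open>Positive semidefiniteness on the complement of the constant vector\<close>

lemma qform_shift:
  assumes "finite I"
  shows "qform I (\<lambda>a b. A a b + m - l * (if a = b then 1 else 0)) x =
    qform I A x + m * (\<Sum>a\<in>I. x a)\<^sup>2 - l * (\<Sum>a\<in>I. (x a)\<^sup>2)"
proof -
  have "qform I (\<lambda>a b. A a b + m - l * (if a = b then 1 else 0)) x =
      qform I A x + m * qform I (\<lambda>_ _. 1) x - l * qform I (\<lambda>a b. if a = b then 1 else 0) x"
    unfolding qform_def by (simp add: algebra_simps sum.distrib sum_subtractf sum_distrib_left)
  moreover have "qform I (\<lambda>a b. if a = b then 1 else 0) x = (\<Sum>a\<in>I. (x a)\<^sup>2)"
    unfolding qform_def using assms
    by (simp add: power2_eq_square if_distrib[of "\<lambda>c. _ * c"] if_distrib[of "\<lambda>c. c * _"] sum.delta cong: if_cong)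
  ultimately show ?thesis unfolding qform_ones by simp
qed

lemma mat_inner_shift:
  assumes "finite I"
  shows "mat_inner I (\<lambda>a b. A a b + m - l * (if a = b then 1 else 0)) X =
    mat_inner I A X + m * mat_inner I (\<lambda>_ _. 1) X - l * (\<Sum>a\<in>I. X a a)"
proof -
  have "mat_inner I (\<lambda>a b. A a b + m - l * (if a = b then 1 else 0)) X =
      mat_inner I A X + m * mat_inner I (\<lambda>_ _. 1) X - l * mat_inner I (\<lambda>a b. if a = b then 1 else 0) X"
    unfolding mat_inner_def by (simp add: algebra_simps sum.distrib sum_subtractf sum_distrib_left)
  moreover have "mat_inner I (\<lambda>a b. if a = b then 1 else 0) X = (\<Sum>a\<in>I. X a a)"
    unfolding mat_inner_def using assms by (simp add: sum_delta_mult)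
  ultimately show ?thesis by simp
qed

lemma mat_vec_shift:
  assumes "a \<in> {1..n}"
  shows "mat_vec n (\<lambda>a b. A a b + m - l * (if a = b then 1 else 0)) y a =
    mat_vec n A y a + m * (\<Sum>b=1..n. y b) - l * y a"
proof -
  have "mat_vec n (\<lambda>a b. A a b + m - l * (if a = b then 1 else 0)) y a =
      mat_vec n A y a + m * (\<Sum>b=1..n. y b) - l * mat_vec n (\<lambda>a b. if a = b then 1 else 0) y a"
    unfolding mat_vec_def by (simp add: algebra_simps sum.distrib sum_subtractf sum_distrib_left)
  moreover have "mat_vec n (\<lambda>a b. if a = b then 1 else 0) y a = y a"
    unfolding mat_vec_def using assms by (simp add: sum_delta_mult)
  ultimately show ?thesis by simp
qed

lemma qform_translate:
  assumes sym: "\<And>a b. a \<in> I \<Longrightarrow> b \<in> I \<Longrightarrow> A a b = A b a"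
    and row: "\<And>a. a \<in> I \<Longrightarrow> (\<Sum>b\<in>I. A a b) = 0"
  shows "qform I A (\<lambda>a. x a + m) = qform I A x"
proof -
  have Ax: "(\<Sum>b\<in>I. A a b * (x b + m)) = (\<Sum>b\<in>I. A a b * x b)" if "a \<in> I" for a
    using row[OF that] by (simp add: distrib_left sum.distrib sum_distrib_right[symmetric])
  have col: "(\<Sum>a\<in>I. A a b) = 0" if "b \<in> I" for b
  proof -
    have "(\<Sum>a\<in>I. A a b) = (\<Sum>a\<in>I. A b a)" using that by (auto intro: sum.cong sym)
    then show ?thesis using row[OF that] by simp
  qed
  have "(\<Sum>a\<in>I. \<Sum>b\<in>I. A a b * x b) = (\<Sum>b\<in>I. x b * (\<Sum>a\<in>I. A a b))"
    by (subst sum.swap) (simp add: sum_distrib_left mult.commute)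
  then have zero: "(\<Sum>a\<in>I. \<Sum>b\<in>I. A a b * x b) = 0" using col by simp
  have "qform I A (\<lambda>a. x a + m) = (\<Sum>a\<in>I. (x a + m) * (\<Sum>b\<in>I. A a b * (x b + m)))"
    unfolding qform_def by (simp add: sum_distrib_left mult.assoc)
  also have "\<dots> = (\<Sum>a\<in>I. (x a + m) * (\<Sum>b\<in>I. A a b * x b))"
    by (intro sum.cong refl) (simp add: Ax)
  also have "\<dots> = qform I A x + m * (\<Sum>a\<in>I. \<Sum>b\<in>I. A a b * x b)"
    unfolding qform_def by (simp add: distrib_right sum.distrib sum_distrib_left algebra_simps)
  finally show ?thesis using zero by simp
qed

(* Gram matrices of embeddings normalised as in the embedding problem: trace one and columns
   summing to zero. *)
definition centred_density :: "nat \<Rightarrow> (nat \<Rightarrow> nat \<Rightarrow> real) \<Rightarrow> bool" where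
  "centred_density n X \<longleftrightarrow>
     (\<forall>a\<in>{1..n}. \<forall>b\<in>{1..n}. X a b = X b a) \<and> psd n X \<and>
     mat_inner {1..n} (\<lambda>_ _. 1) X = 0 \<and> (\<Sum>a=1..n. X a a) = 1"

definition mix :: "real \<Rightarrow> ('a \<Rightarrow> 'a \<Rightarrow> real) \<Rightarrow> ('a \<Rightarrow> 'a \<Rightarrow> real) \<Rightarrow> 'a \<Rightarrow> 'a \<Rightarrow> real" where
  "mix s X Y a b = (1 - s) * X a b + s * Y a b"

lemma mat_inner_mix: "mat_inner I A (mix s X Y) = (1 - s) * mat_inner I A X + s * mat_inner I A Y"
proof -
  have "mat_inner I A (mix s X Y) = (\<Sum>a\<in>I. \<Sum>b\<in>I. (1 - s) * (A a b * X a b) + s * (A a b * Y a b))"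
    unfolding mat_inner_def mix_def by (simp add: algebra_simps)
  then show ?thesis unfolding mat_inner_def by (simp only: sum.distrib sum_distrib_left)
qed

lemma qform_mix: "qform I (mix s X Y) x = (1 - s) * qform I X x + s * qform I Y x"
proof -
  have "qform I (mix s X Y) x = (\<Sum>a\<in>I. \<Sum>b\<in>I. (1 - s) * (x a * X a b * x b) + s * (x a * Y a b * x b))"
    unfolding qform_def mix_def by (simp add: algebra_simps)
  then show ?thesis unfolding qform_def by (simp only: sum.distrib sum_distrib_left)
qed

lemma convex_under_centred_density: "convex_under {X. centred_density n X} mix"
  unfolding convex_under_def
proof (intro allI impI, unfold mem_Collect_eq)
  fix s :: real and X Y
  assume X: "centred_density n X" and Y: "centred_density n Y" and s: "0 \<le> s" "s \<le> 1"
  have "(\<Sum>a=1..n. mix s X Y a a) = (1 - s) * (\<Sum>a=1..n. X a a) + s * (\<Sum>a=1..n. Y a a)"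
    unfolding mix_def by (simp add: sum.distrib sum_distrib_left)
  moreover have "0 \<le> qform {1..n} (mix s X Y) x" for x
    using X Y s unfolding qform_mix centred_density_def psd_iff_qform by simp
  ultimately show "centred_density n (mix s X Y)"
    using X Y unfolding centred_density_def mat_inner_mix psd_iff_qform by (simp add: mix_def)
qed

lemma rayleigh_bound_of_density_bound:
  assumes bound: "\<And>X. centred_density n X \<Longrightarrow> lam \<le> mat_inner {1..n} A X"
    and centred: "(\<Sum>a=1..n. x a) = 0"
  shows "lam * (\<Sum>a=1..n. (x a)\<^sup>2) \<le> qform {1..n} A x"
proof (cases "(\<Sum>a=1..n. (x a)\<^sup>2) = 0")
  case True
  then have "x a = 0" if "a \<in> {1..n}" for a using that by (simp add: sum_nonneg_eq_0_iff)
  then have "qform {1..n} A x = 0" unfolding qform_def by simp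
  then show ?thesis using True by simp
next
  case False
  define r where "r = (\<Sum>a=1..n. (x a)\<^sup>2)"
  have r: "0 < r" using False unfolding r_def by (simp add: order_le_neq_trans sum_nonneg)
  define X where "X a b = x a * x b / r" for a b
  have X_inner: "mat_inner {1..n} B X = qform {1..n} B x / r" for B
    unfolding qform_eq_mat_inner mat_inner_def X_def sum_divide_distrib by (simp add: mult.assoc)
  have "centred_density n X"
    unfolding centred_density_def psd_iff_qform
  proof (intro conjI ballI allI)
    show "X a b = X b a" for a b unfolding X_def by (simp add: mult.commute)
    show "0 \<le> qform {1..n} X y" for y
    proof -
      have "qform {1..n} X y = qform {1..n} (\<lambda>a b. x a * x b) y / r"
        unfolding qform_def X_def sum_divide_distrib by simp
      then show ?thesis using r unfolding qform_outer by simp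
    qed
    show "mat_inner {1..n} (\<lambda>_ _. 1) X = 0" unfolding X_inner qform_ones centred by simp
    show "(\<Sum>a=1..n. X a a) = 1"
      using r unfolding X_def r_def sum_divide_distrib[symmetric] by (simp add: power2_eq_square)
  qed
  then have "lam \<le> qform {1..n} A x / r" using bound[of X] X_inner[of A] by simp
  then show ?thesis using r unfolding r_def[symmetric] by (simp add: field_simps)
qed

lemma psd_shift_of_rayleigh_bound:
  assumes n: "0 < n" and sym: "\<And>a b. a \<in> {1..n} \<Longrightarrow> b \<in> {1..n} \<Longrightarrow> A a b = A b a"
    and row: "\<And>a. a \<in> {1..n} \<Longrightarrow> (\<Sum>b=1..n. A a b) = 0"
    and rayleigh: "\<And>z. (\<Sum>a=1..n. z a) = 0 \<Longrightarrow> lam * (\<Sum>a=1..n. (z a)\<^sup>2) \<le> qform {1..n} A z"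
  shows "psd n (\<lambda>a b. A a b + \<bar>lam\<bar> - lam * (if a = b then 1 else 0))"
  unfolding psd_iff_qform
proof
  fix x :: "nat \<Rightarrow> real"
  define m where "m = (\<Sum>a=1..n. x a) / n"
  define z where "z a = x a - m" for a
  have sum_x: "(\<Sum>a=1..n. x a) = n * m" unfolding m_def using n by simp
  then have sum_z: "(\<Sum>a=1..n. z a) = 0" unfolding z_def by (simp add: sum_subtractf)
  have "qform {1..n} A x = qform {1..n} A (\<lambda>a. z a + m)" unfolding z_def by simp
  also have "\<dots> = qform {1..n} A z" by (rule qform_translate[OF sym row])
  finally have "lam * (\<Sum>a=1..n. (z a)\<^sup>2) \<le> qform {1..n} A x" using rayleigh[OF sum_z] by simp
  moreover have "(\<Sum>a=1..n. (x a)\<^sup>2) = (\<Sum>a=1..n. (z a)\<^sup>2) + n * m\<^sup>2"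
  proof -
    have "(\<Sum>a=1..n. (x a)\<^sup>2) = (\<Sum>a=1..n. (z a)\<^sup>2 + 2 * m * z a + m\<^sup>2)"
      unfolding z_def by (intro sum.cong refl) (simp add: power2_eq_square algebra_simps)
    then show ?thesis using sum_z by (simp add: sum.distrib sum_distrib_left[symmetric])
  qed
  moreover have "0 \<le> n * m\<^sup>2 * (\<bar>lam\<bar> * n - lam)"
    using n by (intro mult_nonneg_nonneg) (auto intro: order_trans[OF abs_ge_self] simp: mult_le_cancel_left1)
  ultimately show "0 \<le> qform {1..n} (\<lambda>a b. A a b + \<bar>lam\<bar> - lam * (if a = b then 1 else 0)) x"
    unfolding qform_shift[OF finite_atLeastAtMost] sum_x by (simp add: power2_eq_square algebra_simps)
qed

section \<open>Laplacians of the multiplex network\<close>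

lemma sum_mult_delta: "finite I \<Longrightarrow> (\<Sum>a\<in>I. x a * delta i a) = (if i \<in> I then x i else 0)"
  unfolding delta_def by (simp add: if_distrib[of "\<lambda>c. _ * c"] sum.delta' cong: if_cong)

lemma qform_Lij:
  assumes "i \<in> {1..n}" "j \<in> {1..n}"
  shows "qform {1..n} (Lij i j) x = (x i - x j)\<^sup>2"
proof -
  have "(\<Sum>a=1..n. x a * (delta i a - delta j a)) = x i - x j"
    using assms by (simp add: right_diff_distrib sum_subtractf sum_mult_delta)
  then show ?thesis unfolding Lij_def qform_outer by simp
qed

lemma mat_inner_Lij_gram:
  assumes "i \<in> {1..n}" "j \<in> {1..n}"
  shows "mat_inner {1..n} (Lij i j) (gram {1..n} u) = sqdist n u i j"
  unfolding mat_inner_gram sqdist_def qform_Lij[OF assms] ..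

lemma Lij_row_sum: "i \<in> {1..n} \<Longrightarrow> j \<in> {1..n} \<Longrightarrow> (\<Sum>b=1..n. Lij i j a b) = 0"
  unfolding Lij_def using sum_mult_delta[of "{1..n}" "\<lambda>_. 1"]
  by (simp add: sum_distrib_left[symmetric] sum_subtractf)

lemma Lw_sym: "Lw N E1 E2 w a b = Lw N E1 E2 w b a"
  unfolding Lw_def L0_def Lij_def by (simp add: mult.commute)

lemma mat_inner_L0:
  "mat_inner I (L0 E1 E2) X = (\<Sum>(i,j)\<in>E1 \<union> E2. mat_inner I (Lij i j) X)"
proof -
  have "L0 E1 E2 = (\<lambda>a b. \<Sum>p\<in>E1 \<union> E2. Lij (fst p) (snd p) a b)"
    by (simp add: fun_eq_iff L0_def case_prod_beta)
  then show ?thesis by (simp add: mat_inner_sum case_prod_beta)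
qed

lemma mat_inner_Lw:
  "mat_inner I (Lw N E1 E2 w) X =
     (\<Sum>i=1..N. w i * mat_inner I (Lij i (N+i)) X) + mat_inner I (L0 E1 E2) X"
proof -
  have "Lw N E1 E2 w = (\<lambda>a b. (\<Sum>i=1..N. w i * Lij i (N+i) a b) + L0 E1 E2 a b)"
    by (simp add: fun_eq_iff Lw_def)
  then show ?thesis by (simp add: mat_inner_add mat_inner_sum mat_inner_scale)
qed

locale multiplex =
  fixes N :: nat and E1 E2 :: "(nat \<times> nat) set"
  assumes layer1: "simple_graph_on {1..N} E1" and layer2: "simple_graph_on {N+1..2*N} E2"
begin

lemma intralayer_edge_range: "(i, j) \<in> E1 \<union> E2 \<Longrightarrow> i \<in> {1..2*N} \<and> j \<in> {1..2*N}"
  using layer1 layer2 unfolding simple_graph_on_def by auto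

lemma Lw_row_sum: "(\<Sum>b=1..2*N. Lw N E1 E2 w a b) = 0"
proof -
  have "(\<Sum>b=1..2*N. Lw N E1 E2 w a b) =
      (\<Sum>b=1..2*N. \<Sum>i=1..N. w i * Lij i (N+i) a b) + (\<Sum>b=1..2*N. \<Sum>p\<in>E1 \<union> E2. Lij (fst p) (snd p) a b)"
    unfolding Lw_def L0_def sum.distrib by (simp add: case_prod_beta)
  also have "\<dots> =
      (\<Sum>i=1..N. w i * (\<Sum>b=1..2*N. Lij i (N+i) a b)) + (\<Sum>p\<in>E1 \<union> E2. \<Sum>b=1..2*N. Lij (fst p) (snd p) a b)"
    unfolding sum_distrib_left by (simp only: sum.swap[of _ "{1..2*N}"])
  also have "\<dots> = 0"
  proof -
    have "(\<Sum>b=1..2*N. Lij i (N+i) a b) = 0" if "i \<in> {1..N}" for i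
      using that by (intro Lij_row_sum) auto
    moreover have "(\<Sum>b=1..2*N. Lij (fst p) (snd p) a b) = 0" if "p \<in> E1 \<union> E2" for p
      using intralayer_edge_range[of "fst p" "snd p"] that by (intro Lij_row_sum) auto
    ultimately show ?thesis by simp
  qed
  finally show ?thesis .
qed

lemma mat_inner_L0_gram:
  "mat_inner {1..2*N} (L0 E1 E2) (gram {1..2*N} U) = (\<Sum>(i,j)\<in>E1 \<union> E2. sqdist (2*N) U i j)"
proof -
  have "mat_inner {1..2*N} (Lij i j) (gram {1..2*N} U) = sqdist (2*N) U i j" if "(i, j) \<in> E1 \<union> E2" for i j
    using intralayer_edge_range[OF that] by (intro mat_inner_Lij_gram) auto
  then show ?thesis unfolding mat_inner_L0 by (auto intro!: sum.cong)
qed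

lemma mat_inner_Lw_gram:
  "mat_inner {1..2*N} (Lw N E1 E2 w) (gram {1..2*N} U) =
     (\<Sum>i=1..N. w i * sqdist (2*N) U i (N+i)) + (\<Sum>(i,j)\<in>E1 \<union> E2. sqdist (2*N) U i j)"
proof -
  have "mat_inner {1..2*N} (Lij i (N+i)) (gram {1..2*N} U) = sqdist (2*N) U i (N+i)" if "i \<in> {1..N}" for i
    using that by (intro mat_inner_Lij_gram) auto
  then show ?thesis unfolding mat_inner_Lw mat_inner_L0_gram by simp
qed

section \<open>Duality between the SDP and the embedding problem\<close>

lemma emb_feasible_of_centred_density:
  assumes X: "centred_density (2*N) X" and U: "\<forall>a\<in>{1..2*N}. \<forall>b\<in>{1..2*N}. X a b = gram {1..2*N} U a b"
    and M: "\<forall>i\<in>{1..N}. sqdist (2*N) U i (N+i) \<le> M"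
  shows "emb_feasible N (- M) U"
proof -
  have "(\<Sum>i=1..2*N. \<Sum>k=1..2*N. (U i k)\<^sup>2) = (\<Sum>i=1..2*N. X i i)"
    using U by (simp add: gram_def power2_eq_square)
  moreover have "(\<Sum>k=1..2*N. (\<Sum>i=1..2*N. U i k)\<^sup>2) = mat_inner {1..2*N} (\<lambda>_ _. 1) X"
    using U unfolding mat_inner_gram[symmetric] qform_ones[symmetric] by (intro mat_inner_cong) auto
  then have "(\<Sum>i=1..2*N. U i k) = 0" if "k \<in> {1..2*N}" for k
    using X that unfolding centred_density_def by (simp add: sum_nonneg_eq_0_iff)
  ultimately show ?thesis
    using X M unfolding emb_feasible_def centred_density_def by simp
qed

lemma density_bound_of_embedding_optimal:
  assumes opt: "emb_optimal N E1 E2 c xi u" and X: "centred_density (2*N) X"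
  shows "\<exists>i\<in>{1..N}. - emb_objective N E1 E2 c xi u \<le>
    mat_inner {1..2*N} (L0 E1 E2) X + c * mat_inner {1..2*N} (Lij i (N+i)) X"
proof -
  obtain U where U: "\<forall>a\<in>{1..2*N}. \<forall>b\<in>{1..2*N}. X a b = gram {1..2*N} U a b"
    using psd_gram_factorization[of "{1..2*N}" X] X unfolding centred_density_def psd_iff_qform by auto
  then have XU: "mat_inner {1..2*N} A X = mat_inner {1..2*N} A (gram {1..2*N} U)" for A
    by (intro mat_inner_cong) auto
  have "N \<noteq> 0"
  proof
    assume "N = 0"
    then show False using X unfolding centred_density_def by simp
  qed
  define M where "M = Max ((\<lambda>i. sqdist (2*N) U i (N+i)) ` {1..N})"
  have "M \<in> (\<lambda>i. sqdist (2*N) U i (N+i)) ` {1..N}"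
    unfolding M_def using \<open>N \<noteq> 0\<close> by (intro Max_in) auto
  then obtain i where i: "i \<in> {1..N}" "sqdist (2*N) U i (N+i) = M" by auto
  have "emb_feasible N (- M) U"
    using emb_feasible_of_centred_density[OF X U] unfolding M_def by simp
  then have "emb_objective N E1 E2 c (- M) U \<le> emb_objective N E1 E2 c xi u"
    using opt unfolding emb_optimal_def by blast
  moreover have "mat_inner {1..2*N} (Lij i (N+i)) X = M"
    using i unfolding XU by (subst mat_inner_Lij_gram) auto
  ultimately show ?thesis
    unfolding XU mat_inner_L0_gram emb_objective_def by (intro bexI[OF _ i(1)]) auto
qed

lemma sdp_feasible_of_density_bound:
  assumes "0 < N" and w: "\<forall>i\<in>{1..N}. 0 \<le> w i" "(\<Sum>i=1..N. w i) = c"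
    and bound: "\<And>X. centred_density (2*N) X \<Longrightarrow> lam \<le> mat_inner {1..2*N} (Lw N E1 E2 w) X"
  shows "sdp_feasible N E1 E2 c w lam \<bar>lam\<bar>"
proof -
  have "psd (2*N) (\<lambda>a b. Lw N E1 E2 w a b + \<bar>lam\<bar> - lam * (if a = b then 1 else 0))"
  proof (rule psd_shift_of_rayleigh_bound)
    show "lam * (\<Sum>a=1..2*N. (z a)\<^sup>2) \<le> qform {1..2*N} (Lw N E1 E2 w) z" if "(\<Sum>a=1..2*N. z a) = 0" for z
      using rayleigh_bound_of_density_bound[OF bound that] .
  qed (use \<open>0 < N\<close> Lw_sym Lw_row_sum in auto)
  then show ?thesis using w unfolding sdp_feasible_def by blast
qed

lemma embedding_value_le_sdp_value:
  assumes "0 < N" "0 \<le> c" and sdp: "sdp_optimal N E1 E2 c w lam2 mu"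
    and emb: "emb_optimal N E1 E2 c xi u"
  shows "- emb_objective N E1 E2 c xi u \<le> lam2"
proof -
  define D where "D = - emb_objective N E1 E2 c xi u"
  define g where "g i X = mat_inner {1..2*N} (L0 E1 E2) X + c * mat_inner {1..2*N} (Lij i (N+i)) X - D"
    for i X
  have "affine_under {X. centred_density (2*N) X} mix (g i)" for i
    unfolding affine_under_def g_def mat_inner_mix by (simp add: algebra_simps)
  moreover have "\<exists>i\<in>{1..N}. 0 \<le> g i X" if "centred_density (2*N) X" for X
    using density_bound_of_embedding_optimal[OF emb that] unfolding g_def D_def by force
  ultimately obtain l where l: "\<forall>i\<in>{1..N}. 0 \<le> l i" "sum l {1..N} = 1"
    "\<forall>X\<in>{X. centred_density (2*N) X}. 0 \<le> (\<Sum>i=1..N. l i * g i X)"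
    using affine_under_finite_nonneg_combination[of "{1..N}" "{X. centred_density (2*N) X}" mix g]
      convex_under_centred_density \<open>0 < N\<close> by auto
  define w' where "w' i = c * l i" for i
  have "(\<Sum>i=1..N. l i * g i X) = mat_inner {1..2*N} (Lw N E1 E2 w') X - D" for X
  proof -
    have "(\<Sum>i=1..N. l i * g i X) = (\<Sum>i=1..N. w' i * mat_inner {1..2*N} (Lij i (N+i)) X) +
        (\<Sum>i=1..N. l i) * (mat_inner {1..2*N} (L0 E1 E2) X - D)"
      unfolding g_def w'_def sum_distrib_right sum.distrib[symmetric] by (intro sum.cong) (auto simp: algebra_simps)
    then show ?thesis unfolding mat_inner_Lw l(2) by simp
  qed
  then have "sdp_feasible N E1 E2 c w' D \<bar>D\<bar>"
    using l \<open>0 \<le> c\<close> \<open>0 < N\<close>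
    by (intro sdp_feasible_of_density_bound) (auto simp: w'_def sum_distrib_left[symmetric])
  then show ?thesis using sdp unfolding sdp_optimal_def D_def by blast
qed

lemma embedding_qform_sum_nonpos:
  assumes "0 < N" "0 \<le> c" and sdp: "sdp_optimal N E1 E2 c w lam2 mu"
    and emb: "emb_optimal N E1 E2 c xi u"
  shows "(\<Sum>k=1..2*N. qform {1..2*N} (\<lambda>a b. Lw N E1 E2 w a b + mu - lam2 * (if a = b then 1 else 0))
      (\<lambda>a. u a k)) \<le> 0"
proof -
  have w: "\<forall>i\<in>{1..N}. 0 \<le> w i" "(\<Sum>i=1..N. w i) = c"
    using sdp unfolding sdp_optimal_def sdp_feasible_def by auto
  have u: "(\<Sum>i=1..2*N. \<Sum>k=1..2*N. (u i k)\<^sup>2) = 1" "\<forall>k\<in>{1..2*N}. (\<Sum>i=1..2*N. u i k) = 0"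
    "\<forall>i\<in>{1..N}. sqdist (2*N) u i (N+i) \<le> - xi"
    using emb unfolding emb_optimal_def emb_feasible_def by auto
  have "(\<Sum>i=1..N. w i * sqdist (2*N) u i (N+i)) \<le> (\<Sum>i=1..N. w i * - xi)"
    using w u by (intro sum_mono mult_left_mono) auto
  also have "\<dots> = (\<Sum>i=1..N. w i) * - xi" by (rule sum_distrib_right[symmetric])
  finally have "mat_inner {1..2*N} (Lw N E1 E2 w) (gram {1..2*N} u) \<le> - emb_objective N E1 E2 c xi u"
    unfolding mat_inner_Lw_gram emb_objective_def using w by simp
  moreover have "mat_inner {1..2*N} (\<lambda>_ _. 1) (gram {1..2*N} u) = 0"
    using u unfolding mat_inner_gram qform_ones by simp
  moreover have "(\<Sum>a=1..2*N. gram {1..2*N} u a a) = 1"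
    using u unfolding gram_def by (simp add: power2_eq_square)
  ultimately show ?thesis
    using embedding_value_le_sdp_value[OF assms]
    unfolding mat_inner_gram[symmetric] mat_inner_shift[OF finite_atLeastAtMost] by simp
qed

lemma embedding_coordinate_eigenvector:
  assumes "0 < N" "0 \<le> c" and sdp: "sdp_optimal N E1 E2 c w lam2 mu"
    and emb: "emb_optimal N E1 E2 c xi u" and k: "k \<in> {1..2*N}" and a: "a \<in> {1..2*N}"
  shows "mat_vec (2*N) (Lw N E1 E2 w) (\<lambda>i. u i k) a = lam2 * u a k"
proof -
  define M where "M a b = Lw N E1 E2 w a b + mu - lam2 * (if a = b then 1 else 0)" for a b
  have psd: "psd (2*N) M"
    using sdp unfolding sdp_optimal_def sdp_feasible_def M_def by auto
  then have nonneg: "\<forall>k\<in>{1..2*N}. 0 \<le> qform {1..2*N} M (\<lambda>a. u a k)"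
    unfolding psd_iff_qform by blast
  then have "(\<Sum>k=1..2*N. qform {1..2*N} M (\<lambda>a. u a k)) = 0"
    using embedding_qform_sum_nonpos[OF assms(1-4)] unfolding M_def[symmetric]
    by (intro antisym sum_nonneg) auto
  then have "qform {1..2*N} M (\<lambda>a. u a k) = 0"
    using nonneg k by (subst (asm) sum_nonneg_eq_0_iff) auto
  then have "mat_vec (2*N) M (\<lambda>i. u i k) a = 0"
    using psd a Lw_sym by (intro psd_qform_zero_imp_mat_vec_zero) (auto simp: M_def)
  moreover have "(\<Sum>i=1..2*N. u i k) = 0"
    using emb k unfolding emb_optimal_def emb_feasible_def by auto
  ultimately show ?thesis
    using mat_vec_shift[OF a, of "Lw N E1 E2 w" mu lam2 "\<lambda>i. u i k"] unfolding M_def by simp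
qed

end

theorem proposition3:
  fixes N :: nat and E1 E2 :: "(nat \<times> nat) set" and c :: real
    and w :: "nat \<Rightarrow> real" and lam2 mu :: real
    and xi :: real and u :: "nat \<Rightarrow> nat \<Rightarrow> real"
  assumes G1: "simple_graph_on {1..N} E1"
    and G2: "simple_graph_on {N+1..2*N} E2"
    and conn: "multiplex_connected N E1 E2"
    and c: "c \<ge> 0"
    and opt_sdp: "sdp_optimal N E1 E2 c w lam2 mu"
    and opt_emb: "emb_optimal N E1 E2 c xi u"
  shows "\<forall>p :: nat \<Rightarrow> real. \<forall>a\<in>{1..2*N}.
           mat_vec (2*N) (Lw N E1 E2 w) (\<lambda>i. \<Sum>k=1..2*N. p k * u i k) a
             = lam2 * (\<Sum>k=1..2*N. p k * u a k)"
proof (intro allI ballI)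
  fix p :: "nat \<Rightarrow> real" and a assume a: "a \<in> {1..2*N}"
  then have "0 < N" by auto
  interpret multiplex N E1 E2 using G1 G2 by unfold_locales
  have "mat_vec (2*N) (Lw N E1 E2 w) (\<lambda>i. \<Sum>k=1..2*N. p k * u i k) a =
      (\<Sum>k=1..2*N. p k * (lam2 * u a k))"
    unfolding mat_vec_linear_combination
    using embedding_coordinate_eigenvector[OF \<open>0 < N\<close> c opt_sdp opt_emb _ a] by simp
  also have "\<dots> = lam2 * (\<Sum>k=1..2*N. p k * u a k)"
    by (simp add: sum_distrib_left algebra_simps)
  finally show "mat_vec (2*N) (Lw N E1 E2 w) (\<lambda>i. \<Sum>k=1..2*N. p k * u i k) a =
      lam2 * (\<Sum>k=1..2*N. p k * u a k)" .
qed

end
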